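(* Let $V$ be an $n$-dimensional vector space over a field $\mathbb{F}$ with an alternating bilinear form $\mathsf{s}$ of maximal rank, $G=\mathrm{Sp}(V)$, and $C=\{C_i\}_{i\in I}$ a chamber of $\Gamma(V)$. For $J\subseteq I$ let $R_J$ be the residue of type $J$ on $C$ and $P_J=\mathrm{Stab}_G(R_J)$. Then $P_J$ acts flag-transitively on $R_J$.
   Context: $\mathrm{Sp}(V)$: linear automorphisms of $V$ preserving $\mathsf{s}$. $\mathrm{Rad}(U)=U\cap U^\perp$; maximal rank means $\dim\mathrm{Rad}(V)\le1$. $\Gamma(V)$: for $i\in I=\{1,\dots,n-1\}$ the objects of type $i$ are the $i$-dimensional subspaces $U$ with $U\cap\mathrm{Rad}(V)=0$ and $\dim\mathrm{Rad}(U)\le1$; $X,Y$ incident iff $X=Y$, or $X\subseteq Y$ with $X\cap\mathrm{Rad}(Y)=0$, or vice versa. A chamber is a set of pairwise incident objects, one of each type. The residue $R_J$ of type $J$ on $C$ is the pre-geometry induced on the objects incident to all $C_i$, $i\in I\setminus J$, and not among them (so $P_J$ equals the stabilizer of the flag $\{C_i\}_{i\in I\setminus J}$). Flag-transitive on $R_J$: for each $K\subseteq J$, transitive on the flags of $R_J$ of type $K$. *)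

theory Defs
  imports Complex_Main
begin

text \<open>Setting: V is the whole type 'v, a vector space over the field 'a via scale;
  s is a bilinear form on V.  All notions below are relative to scale and s.\<close>

definition bilinear_form :: "('a::field \<Rightarrow> 'v::ab_group_add \<Rightarrow> 'v) \<Rightarrow> ('v \<Rightarrow> 'v \<Rightarrow> 'a) \<Rightarrow> bool" where
  "bilinear_form scale s \<longleftrightarrow>
     (\<forall>x. Vector_Spaces.linear scale (*) (\<lambda>y. s x y)) \<and>
     (\<forall>y. Vector_Spaces.linear scale (*) (\<lambda>x. s x y))"

definition alternating_form :: "('v \<Rightarrow> 'v \<Rightarrow> 'a::zero) \<Rightarrow> bool" where
  "alternating_form s \<longleftrightarrow> (\<forall>x. s x x = 0)"

definition perp :: "('v \<Rightarrow> 'v \<Rightarrow> 'a::zero) \<Rightarrow> 'v set \<Rightarrow> 'v set" where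
  "perp s U = {x. \<forall>u\<in>U. s x u = 0}"

definition Rad :: "('v \<Rightarrow> 'v \<Rightarrow> 'a::zero) \<Rightarrow> 'v set \<Rightarrow> 'v set" where
  "Rad s U = U \<inter> perp s U"

definition maximal_rank :: "('a::field \<Rightarrow> 'v::ab_group_add \<Rightarrow> 'v) \<Rightarrow> ('v \<Rightarrow> 'v \<Rightarrow> 'a) \<Rightarrow> bool" where
  "maximal_rank scale s \<longleftrightarrow> vector_space.dim scale (Rad s UNIV) \<le> 1"

definition Sp :: "('a::field \<Rightarrow> 'v::ab_group_add \<Rightarrow> 'v) \<Rightarrow> ('v \<Rightarrow> 'v \<Rightarrow> 'a) \<Rightarrow> ('v \<Rightarrow> 'v) set" where
  "Sp scale s = {g. Vector_Spaces.linear scale scale g \<and> bij g \<and> (\<forall>x y. s (g x) (g y) = s x y)}"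

definition types :: "('a::field \<Rightarrow> 'v::ab_group_add \<Rightarrow> 'v) \<Rightarrow> nat set" where
  "types scale = {1..vector_space.dim scale (UNIV::'v set) - 1}"

definition objects :: "('a::field \<Rightarrow> 'v::ab_group_add \<Rightarrow> 'v) \<Rightarrow> ('v \<Rightarrow> 'v \<Rightarrow> 'a) \<Rightarrow> 'v set set" where
  "objects scale s = {U. module.subspace scale U \<and>
      vector_space.dim scale U \<in> types scale \<and>
      U \<inter> Rad s UNIV = {0} \<and>
      vector_space.dim scale (Rad s U) \<le> 1}"

definition otype :: "('a::field \<Rightarrow> 'v::ab_group_add \<Rightarrow> 'v) \<Rightarrow> 'v set \<Rightarrow> nat" where
  "otype scale U = vector_space.dim scale U"

definition incident :: "('v \<Rightarrow> 'v \<Rightarrow> 'a::zero) \<Rightarrow> 'v::zero set \<Rightarrow> 'v set \<Rightarrow> bool" where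
  "incident s X Y \<longleftrightarrow> X = Y \<or> (X \<subseteq> Y \<and> X \<inter> Rad s Y = {0}) \<or> (Y \<subseteq> X \<and> Y \<inter> Rad s X = {0})"

definition flag_of_type :: "('a::field \<Rightarrow> 'v::ab_group_add \<Rightarrow> 'v) \<Rightarrow> ('v \<Rightarrow> 'v \<Rightarrow> 'a) \<Rightarrow> 'v set set \<Rightarrow> nat set \<Rightarrow> 'v set set \<Rightarrow> bool" where
  "flag_of_type scale s R K F \<longleftrightarrow> F \<subseteq> R \<and> (\<forall>X\<in>F. \<forall>Y\<in>F. incident s X Y) \<and>
     inj_on (otype scale) F \<and> otype scale ` F = K"

definition chamber :: "('a::field \<Rightarrow> 'v::ab_group_add \<Rightarrow> 'v) \<Rightarrow> ('v \<Rightarrow> 'v \<Rightarrow> 'a) \<Rightarrow> 'v set set \<Rightarrow> bool" where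
  "chamber scale s C \<longleftrightarrow> flag_of_type scale s (objects scale s) (types scale) C"

definition residue :: "('a::field \<Rightarrow> 'v::ab_group_add \<Rightarrow> 'v) \<Rightarrow> ('v \<Rightarrow> 'v \<Rightarrow> 'a) \<Rightarrow> 'v set set \<Rightarrow> nat set \<Rightarrow> 'v set set" where
  "residue scale s C J = {X \<in> objects scale s.
      (\<forall>Y\<in>C. otype scale Y \<in> types scale - J \<longrightarrow> incident s X Y) \<and>
      X \<notin> {Y\<in>C. otype scale Y \<in> types scale - J}}"

definition parabolic :: "('a::field \<Rightarrow> 'v::ab_group_add \<Rightarrow> 'v) \<Rightarrow> ('v \<Rightarrow> 'v \<Rightarrow> 'a) \<Rightarrow> 'v set set \<Rightarrow> nat set \<Rightarrow> ('v \<Rightarrow> 'v) set" where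
  "parabolic scale s C J = {g \<in> Sp scale s. \<forall>Y\<in>C. otype scale Y \<in> types scale - J \<longrightarrow> g ` Y = Y}"

definition flag_transitive :: "('a::field \<Rightarrow> 'v::ab_group_add \<Rightarrow> 'v) \<Rightarrow> ('v \<Rightarrow> 'v \<Rightarrow> 'a) \<Rightarrow> ('v \<Rightarrow> 'v) set \<Rightarrow> 'v set set \<Rightarrow> nat set \<Rightarrow> bool" where
  "flag_transitive scale s P R J \<longleftrightarrow>
     (\<forall>K\<subseteq>J. \<forall>F F'. flag_of_type scale s R K F \<and> flag_of_type scale s R K F' \<longrightarrow>
        (\<exists>g\<in>P. (\<lambda>X. g ` X) ` F = F'))"

end

theory Submission
  imports Defs
begin

text \<open>Adjoin V itself to the flag F and to the part {C_i | i \<notin> J} of the chamber. The result is a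
  chain of subspaces, each of whose radicals has dimension at most 1 and meets every smaller
  member trivially. A Gram-Schmidt induction, adding a hyperbolic pair at a time, yields for such a
  chain a basis e_0, f_0, e_1, f_1, ... (ending with a radical vector if dim V is odd) whose initial
  segments span the members of the chain. The bases obtained from two flags F, F' of the same type
  have the same Gram matrix, so the linear map between them lies in Sp(V); it fixes every C_i with
  i \<notin> J and maps F onto F'.\<close>

text \<open>The Gram matrix of a basis e_0, f_0, e_1, f_1, ... with s(e_t, f_t) = 1.\<close>

definition symplectic_gram :: "nat \<Rightarrow> nat \<Rightarrow> 'a::field" where
  "symplectic_gram i j =
     (if even i \<and> j = Suc i then 1 else if even j \<and> i = Suc j then -1 else 0)"

lemma symplectic_gram_antisym: "symplectic_gram j i = - (symplectic_gram i j :: 'a::field)"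
  unfolding symplectic_gram_def by auto

lemma symplectic_gram_diag [simp]: "symplectic_gram i i = 0"
  unfolding symplectic_gram_def by auto

lemma symplectic_gram_even_less: "j < 2*m \<Longrightarrow> symplectic_gram (2*m) j = 0"
  unfolding symplectic_gram_def by (auto, presburger)

lemma symplectic_gram_odd_less: "j < 2*m \<Longrightarrow> symplectic_gram (Suc (2*m)) j = 0"
  unfolding symplectic_gram_def by auto

lemma symplectic_gram_odd_even: "symplectic_gram (Suc (2*m)) (2*m) = -1"
  unfolding symplectic_gram_def by auto

lemma symplectic_gram_pair_simps [simp]:
  "symplectic_gram (2*t) (2*u) = 0"
  "symplectic_gram (Suc (2*t)) (Suc (2*u)) = 0"
  "symplectic_gram (2*t) (Suc (2*u)) = (if t = u then 1 else 0)"
  "symplectic_gram (Suc (2*t)) (2*u) = (if t = u then -1 else 0)"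
  unfolding symplectic_gram_def by (auto, presburger+)

lemma fun_upd_image_lessThan_Suc: "(b(k := x)) ` {..<Suc k} = insert x (b ` {..<k})"
  by (auto simp: lessThan_Suc)

lemma fun_upd_image_lessThan: "j \<le> (k::nat) \<Longrightarrow> (b(k := x)) ` {..<j} = b ` {..<j}"
  by (rule image_cong[OF refl]) auto

lemma image_eq_if_keys_match:
  assumes "f ` A = f ` B" and "\<And>a b. a \<in> A \<Longrightarrow> b \<in> B \<Longrightarrow> f a = f b \<Longrightarrow> h a = b"
  shows "h ` A = B"
  using assms by (smt (verit) image_iff subsetI subset_antisym)

context finite_dimensional_vector_space
begin

lemma dim_le_one_in_span:
  assumes "dim R \<le> 1" "x \<in> R" "y \<in> R" "x \<noteq> 0"
  shows "y \<in> span {x}"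
proof (rule ccontr)
  assume y: "y \<notin> span {x}"
  moreover have "independent {x}"
    using \<open>x \<noteq> 0\<close> by simp
  ultimately have "independent {y, x}"
    by (rule independent_insertI)
  then have "card {y, x} \<le> dim R"
    using assms(2,3) by (intro independent_card_le_dim) auto
  moreover have "y \<noteq> x"
    using y span_base[of x "{x}"] by auto
  ultimately show False
    using assms(1) by simp
qed

lemma subspace_eq_UNIV_iff_dim: "subspace U \<Longrightarrow> U = UNIV \<longleftrightarrow> dim U = dimension"
  using dim_eq_full span_eq_iff by metis

end

locale alternating_space = finite_dimensional_vector_space scale Basis
  for scale :: "'a::field \<Rightarrow> 'v::ab_group_add \<Rightarrow> 'v" (infixr \<open>*s\<close> 75) and Basis :: "'v set" +
  fixes s :: "'v \<Rightarrow> 'v \<Rightarrow> 'a"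
  assumes bilinear: "bilinear_form scale s" and alternating: "alternating_form s"
begin

lemma linear_form_left: "Vector_Spaces.linear scale (*) (\<lambda>x. s x z)"
  using bilinear unfolding bilinear_form_def by blast

lemma linear_form_right: "Vector_Spaces.linear scale (*) (s z)"
  using bilinear unfolding bilinear_form_def by blast

sublocale form_left: Vector_Spaces.linear scale "(*)" "\<lambda>x. s x z" for z
  by (rule linear_form_left)

sublocale form_right: Vector_Spaces.linear scale "(*)" "s z" for z
  by (rule linear_form_right)

lemma form_self [simp]: "s x x = 0"
  using alternating unfolding alternating_form_def by blast

lemma form_swap: "s y x = - s x y"
proof -
  have "s x y + s y x = 0"
    using form_left.add[of x y "x + y"] by (simp add: form_right.add)
  then show ?thesis by (metis add.commute eq_neg_iff_add_eq_0)
qed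

lemma form_preserved_on_span:
  assumes g: "Vector_Spaces.linear scale scale g"
    and B: "\<And>a c. a \<in> B \<Longrightarrow> c \<in> B \<Longrightarrow> s (g a) (g c) = s a c"
    and x: "x \<in> span B" and y: "y \<in> span B"
  shows "s (g x) (g y) = s x y"
proof -
  interpret P: vector_space_pair scale "(*)"
    by (intro vector_space_pair.intro vector_space_axioms form_left.vs2.vector_space_axioms)
  have "s (g x) (g c) = s x c" if c: "c \<in> B" for c
  proof (rule P.linear_eq_on_span[where f = "\<lambda>v. s (g v) (g c)", OF _ linear_form_left _ x])
    show "Vector_Spaces.linear scale (*) (\<lambda>v. s (g v) (g c))"
      using Vector_Spaces.linear_compose[OF g linear_form_left] by (simp add: comp_def)
    show "\<And>v. v \<in> B \<Longrightarrow> s (g v) (g c) = s v c"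
      using B c by blast
  qed
  moreover have "Vector_Spaces.linear scale (*) (\<lambda>v. s (g x) (g v))"
    using Vector_Spaces.linear_compose[OF g linear_form_right] by (simp add: comp_def)
  ultimately show ?thesis
    using P.linear_eq_on_span[where f = "\<lambda>v. s (g x) (g v)", OF _ linear_form_right _ y] by blast
qed

definition symplectic_frame :: "(nat \<Rightarrow> 'v) \<Rightarrow> nat \<Rightarrow> bool" where
  "symplectic_frame b k \<longleftrightarrow> independent (b ` {..<k}) \<and> inj_on b {..<k} \<and>
     (\<forall>i<k. \<forall>j<k. s (b i) (b j) = symplectic_gram i j)"

lemma dim_span_symplectic_frame: "symplectic_frame b k \<Longrightarrow> dim (span (b ` {..<k})) = k"
  unfolding symplectic_frame_def by (simp add: dim_eq_card_independent card_image)

lemma span_symplectic_frame_dimension: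
  "symplectic_frame b dimension \<Longrightarrow> span (b ` {..<dimension}) = UNIV"
  using dim_span_symplectic_frame[of b dimension] dim_eq_full[of "b ` {..<dimension}"]
  by (simp only: dim_span)

lemma symplectic_frame_extend:
  assumes b: "symplectic_frame b k" and x: "x \<notin> span (b ` {..<k})"
    and gram: "\<And>j. j < k \<Longrightarrow> s x (b j) = symplectic_gram k j"
  shows "symplectic_frame (b(k := x)) (Suc k)"
  unfolding symplectic_frame_def
proof (intro conjI allI impI)
  have "independent (b ` {..<k})"
    using b unfolding symplectic_frame_def by blast
  then show "independent ((b(k := x)) ` {..<Suc k})"
    unfolding fun_upd_image_lessThan_Suc by (rule independent_insertI[OF x])
  have "inj_on (b(k := x)) {..<k} \<longleftrightarrow> inj_on b {..<k}"
    by (rule inj_on_cong) simp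
  then have "inj_on (b(k := x)) {..<k}"
    using b unfolding symplectic_frame_def by blast
  moreover have "x \<notin> b ` {..<k}"
    by (meson x span_base)
  ultimately show "inj_on (b(k := x)) {..<Suc k}"
    by (simp add: lessThan_Suc fun_upd_image_lessThan)
next
  fix i j assume i: "i < Suc k" and j: "j < Suc k"
  have old: "s (b i) (b j) = symplectic_gram i j" if "i < k" "j < k"
    using b that unfolding symplectic_frame_def by blast
  have new_left: "s x (b j) = symplectic_gram k j" if "j < k" for j
    using gram that .
  have new_right: "s (b i) x = symplectic_gram i k" if "i < k"
    using form_swap[of "b i" x] gram[OF that] by (simp add: symplectic_gram_antisym[of i k])
  consider "i < k" "j < k" | "i = k" "j < k" | "i < k" "j = k" | "i = k" "j = k"
    using i j by linarith
  then show "s ((b(k := x)) i) ((b(k := x)) j) = symplectic_gram i j"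
    by cases (simp_all add: old new_left new_right)
qed

definition symplectic_projection :: "(nat \<Rightarrow> 'v) \<Rightarrow> nat \<Rightarrow> 'v \<Rightarrow> 'v" where
  "symplectic_projection b m y =
     (\<Sum>t<m. s y (b (Suc (2*t))) *s b (2*t) - s y (b (2*t)) *s b (Suc (2*t)))"

lemma symplectic_projection_in_span: "symplectic_projection b m y \<in> span (b ` {..<2*m})"
  unfolding symplectic_projection_def
  by (intro span_sum span_diff span_scale span_base) auto

lemma form_symplectic_projection:
  assumes b: "symplectic_frame b (2*m)" and j: "j < 2*m"
  shows "s (y - symplectic_projection b m y) (b j) = 0"
proof -
  define u where "u = j div 2"
  have u: "j = 2*u \<or> j = Suc (2*u)" "u < m"
    unfolding u_def using j by presburger+
  have gram: "s (b i) (b j) = symplectic_gram i j" if "i < 2*m" for i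
    using b j that unfolding symplectic_frame_def by blast
  have "s (symplectic_projection b m y) (b j)
      = (\<Sum>t<m. s y (b (Suc (2*t))) * s (b (2*t)) (b j) - s y (b (2*t)) * s (b (Suc (2*t))) (b j))"
    unfolding symplectic_projection_def by (simp add: form_left.sum form_left.diff form_left.scale)
  also have "\<dots> = (\<Sum>t<m. if t = u then s y (b j) else 0)"
    by (rule sum.cong) (use u in \<open>auto simp: gram\<close>)
  also have "\<dots> = s y (b j)"
    using u(2) by simp
  finally show ?thesis
    by (simp add: form_left.diff)
qed

lemma exists_orthogonal_outside:
  assumes b: "symplectic_frame b (2*m)"
    and S: "subspace S" "span (b ` {..<2*m}) \<subseteq> S"
    and U: "subspace U" "span (b ` {..<2*m}) \<subseteq> U" and dim: "dim S < dim U"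
  shows "\<exists>x\<in>U. x \<notin> S \<and> (\<forall>j<2*m. s x (b j) = 0)"
proof -
  obtain u where u: "u \<in> U" "u \<notin> S"
    using dim dim_subset[of U S] by auto
  define p where "p = symplectic_projection b m u"
  have p: "p \<in> S" "p \<in> U"
    unfolding p_def using symplectic_projection_in_span S U by blast+
  have "u - p \<notin> S"
    using u(2) subspace_add[OF S(1) _ p(1), of "u - p"] by auto
  moreover have "u - p \<in> U"
    using U(1) u(1) p(2) by (rule subspace_diff)
  ultimately show ?thesis
    using form_symplectic_projection[OF b] unfolding p_def by blast
qed

lemma symplectic_frame_add_pair:
  assumes b: "symplectic_frame b (2*m)" and x: "x \<notin> span (b ` {..<2*m})"
    and x_orth: "\<forall>j<2*m. s x (b j) = 0" and xy: "s x y \<noteq> 0"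
  shows "\<exists>z\<in>span (insert y (b ` {..<2*m})).
           symplectic_frame (b(2*m := x, Suc (2*m) := z)) (Suc (Suc (2*m)))"
proof -
  define y' where "y' = y - symplectic_projection b m y"
  have "s x (symplectic_projection b m y) = 0"
    by (rule form_right.eq_0_on_span[OF _ symplectic_projection_in_span]) (use x_orth in auto)
  then have xy': "s x y' = s x y"
    unfolding y'_def by (simp add: form_right.diff)
  define z where "z = inverse (s x y') *s y'"
  have xz: "s x z = 1"
    unfolding z_def using xy xy' by (simp add: form_right.scale)
  have z_orth: "s z (b j) = 0" if "j < 2*m" for j
    unfolding z_def y'_def using form_symplectic_projection[OF b that] by (simp add: form_left.scale)
  have "symplectic_projection b m y \<in> span (insert y (b ` {..<2*m}))"
    using symplectic_projection_in_span span_mono[of "b ` {..<2*m}" "insert y (b ` {..<2*m})"]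
    by blast
  then have "y' \<in> span (insert y (b ` {..<2*m}))"
    unfolding y'_def by (rule span_diff[OF span_base[OF insertI1]])
  then have z_span: "z \<in> span (insert y (b ` {..<2*m}))"
    unfolding z_def by (rule span_scale)
  define b1 where "b1 = b(2*m := x)"
  have b1: "symplectic_frame b1 (Suc (2*m))"
    unfolding b1_def using x_orth symplectic_gram_even_less
    by (intro symplectic_frame_extend[OF b x]) auto
  have "s x w = 0" if "w \<in> b1 ` {..<Suc (2*m)}" for w
    using that x_orth unfolding b1_def fun_upd_image_lessThan_Suc by auto
  then have "z \<notin> span (b1 ` {..<Suc (2*m)})"
    using form_right.eq_0_on_span[of "b1 ` {..<Suc (2*m)}" x z] xz by auto
  moreover have "s z (b1 j) = symplectic_gram (Suc (2*m)) j" if "j < Suc (2*m)" for j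
    using that z_orth form_swap[of z x] xz
    by (auto simp: b1_def less_Suc_eq symplectic_gram_odd_even symplectic_gram_odd_less)
  ultimately have "symplectic_frame (b1(Suc (2*m) := z)) (Suc (Suc (2*m)))"
    by (rule symplectic_frame_extend[OF b1])
  then show ?thesis
    using z_span unfolding b1_def by blast
qed

definition admissible_chain :: "'v set set \<Rightarrow> bool" where
  "admissible_chain G \<longleftrightarrow> UNIV \<in> G \<and> inj_on dim G \<and>
     (\<forall>U\<in>G. subspace U \<and> dim (Rad s U) \<le> 1) \<and>
     (\<forall>X\<in>G. \<forall>Y\<in>G. dim X < dim Y \<longrightarrow> X \<subseteq> Y \<and> X \<inter> Rad s Y = {0})"

lemma admissible_chain_subspace: "admissible_chain G \<Longrightarrow> U \<in> G \<Longrightarrow> subspace U"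
  unfolding admissible_chain_def by blast

lemma admissible_chain_dim_Rad: "admissible_chain G \<Longrightarrow> U \<in> G \<Longrightarrow> dim (Rad s U) \<le> 1"
  unfolding admissible_chain_def by blast

lemma admissible_chain_dim_eq:
  "admissible_chain G \<Longrightarrow> X \<in> G \<Longrightarrow> Y \<in> G \<Longrightarrow> dim X = dim Y \<Longrightarrow> X = Y"
  unfolding admissible_chain_def by (meson inj_onD)

lemma admissible_chain_less:
  "admissible_chain G \<Longrightarrow> X \<in> G \<Longrightarrow> Y \<in> G \<Longrightarrow> dim X < dim Y \<Longrightarrow> X \<subseteq> Y \<and> X \<inter> Rad s Y = {0}"
  unfolding admissible_chain_def by blast

lemma admissible_chain_mono:
  "admissible_chain G \<Longrightarrow> X \<in> G \<Longrightarrow> Y \<in> G \<Longrightarrow> dim X \<le> dim Y \<Longrightarrow> X \<subseteq> Y"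
  using admissible_chain_dim_eq admissible_chain_less by (metis le_neq_implies_less order_refl)

lemma admissible_chain_least_above:
  assumes G: "admissible_chain G" and d: "d < dimension"
  obtains U where "U \<in> G" "d < dim U" "\<And>X. X \<in> G \<Longrightarrow> d < dim X \<Longrightarrow> U \<subseteq> X"
proof -
  have "UNIV \<in> G \<and> d < dim (UNIV :: 'v set)"
    using G d unfolding admissible_chain_def by (simp add: dimension_def)
  from ex_has_least_nat[where P = "\<lambda>X. X \<in> G \<and> d < dim X" and m = dim, OF this]
  show ?thesis
    using that admissible_chain_mono[OF G] by blast
qed

definition adapted_frame :: "'v set set \<Rightarrow> (nat \<Rightarrow> 'v) \<Rightarrow> nat \<Rightarrow> bool" where
  "adapted_frame G b k \<longleftrightarrow> symplectic_frame b k \<and>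
     (\<forall>U\<in>G. dim U \<le> k \<longrightarrow> U = span (b ` {..<dim U})) \<and>
     (\<forall>U\<in>G. k \<le> dim U \<longrightarrow> b ` {..<k} \<subseteq> U)"

lemma adapted_frame_0:
  assumes G: "admissible_chain G"
  shows "adapted_frame G b 0"
  unfolding adapted_frame_def symplectic_frame_def
proof (intro conjI ballI impI)
  fix U assume U: "U \<in> G" "dim U \<le> 0"
  then have "U = {0}"
    using dim_eq_0 subspace_0[OF admissible_chain_subspace[OF G U(1)]] by auto
  then show "U = span (b ` {..<dim U})"
    using U(2) by simp
qed (auto simp: independent_empty)

lemma adapted_frame_add_pair:
  assumes G: "admissible_chain G" and b: "adapted_frame G b (2*m)"
    and U: "U \<in> G" "span (b ` {..<2*m}) \<subseteq> U"
    and above: "\<And>X. X \<in> G \<Longrightarrow> Suc (Suc (2*m)) \<le> dim X \<Longrightarrow> U \<subseteq> X"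
    and x: "x \<in> U" "x \<notin> span (b ` {..<2*m})" "\<forall>j<2*m. s x (b j) = 0"
    and y: "y \<in> U" "s x y \<noteq> 0"
    and odd: "\<And>X. X \<in> G \<Longrightarrow> dim X = Suc (2*m) \<Longrightarrow> X = span (insert x (b ` {..<2*m}))"
  shows "\<exists>b'. adapted_frame G b' (Suc (Suc (2*m)))"
proof -
  have frame: "symplectic_frame b (2*m)"
    and low: "\<And>X. X \<in> G \<Longrightarrow> dim X \<le> 2*m \<Longrightarrow> X = span (b ` {..<dim X})"
    using b unfolding adapted_frame_def by auto
  obtain z where z: "z \<in> span (insert y (b ` {..<2*m}))"
    and frame': "symplectic_frame (b(2*m := x, Suc (2*m) := z)) (Suc (Suc (2*m)))"
    using symplectic_frame_add_pair[OF frame x(2,3) y(2)] by blast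
  let ?b' = "b(2*m := x, Suc (2*m) := z)"
  have subU: "subspace U"
    using G U(1) by (rule admissible_chain_subspace)
  have b_U: "b ` {..<2*m} \<subseteq> U"
    using span_superset U(2) by (rule subset_trans)
  then have "insert y (b ` {..<2*m}) \<subseteq> U"
    using y(1) by simp
  then have "z \<in> U"
    using z span_minimal[OF _ subU] by blast
  have prefix: "?b' ` {..<j} = b ` {..<j}" if "j \<le> 2*m" for j
    using that by (simp add: fun_upd_image_lessThan)
  have "?b' ` {..<Suc (2*m)} = (b(2*m := x)) ` {..<Suc (2*m)}"
    by (rule fun_upd_image_lessThan) (rule order_refl)
  also have "\<dots> = insert x (b ` {..<2*m})"
    by (rule fun_upd_image_lessThan_Suc)
  finally have prefix_odd: "?b' ` {..<Suc (2*m)} = insert x (b ` {..<2*m})" .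
  have "?b' ` {..<Suc (Suc (2*m))} = insert z (insert x (b ` {..<2*m}))"
    by (simp only: fun_upd_image_lessThan_Suc)
  then have in_U: "?b' ` {..<Suc (Suc (2*m))} \<subseteq> U"
    using \<open>z \<in> U\<close> x(1) b_U by simp
  have "adapted_frame G ?b' (Suc (Suc (2*m)))"
    unfolding adapted_frame_def
  proof (intro conjI ballI impI frame')
    fix X assume X: "X \<in> G" "dim X \<le> Suc (Suc (2*m))"
    consider "dim X \<le> 2*m" | "dim X = Suc (2*m)" | "dim X = Suc (Suc (2*m))"
      using X(2) by linarith
    then show "X = span (?b' ` {..<dim X})"
    proof cases
      case 1
      then show ?thesis using low[OF X(1)] prefix by simp
    next
      case 2
      then show ?thesis using odd[OF X(1)] prefix_odd by simp
    next
      case 3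
      then have "span (?b' ` {..<dim X}) \<subseteq> X"
        using in_U above[OF X(1)] by (intro span_minimal admissible_chain_subspace[OF G X(1)]) auto
      moreover have "dim (span (?b' ` {..<dim X})) = dim X"
        using dim_span_symplectic_frame[OF frame'] 3 by simp
      ultimately show ?thesis
        using subspace_dim_equal[OF subspace_span admissible_chain_subspace[OF G X(1)]]
        by (metis order_refl)
    qed
  next
    fix X assume "X \<in> G" "Suc (Suc (2*m)) \<le> dim X"
    then show "?b' ` {..<Suc (Suc (2*m))} \<subseteq> X"
      using in_U above by blast
  qed
  then show ?thesis by blast
qed

lemma dim_span_insert_symplectic_frame:
  "symplectic_frame b k \<Longrightarrow> x \<notin> span (b ` {..<k}) \<Longrightarrow> dim (span (insert x (b ` {..<k}))) = Suc k"
  using dim_span_symplectic_frame[of b k] by (simp add: dim_insert)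

lemma exists_orthogonal_nonradical:
  assumes b: "symplectic_frame b (2*m)" and U: "subspace U" "dim (Rad s U) \<le> 1"
    and W: "span (b ` {..<2*m}) \<subseteq> U" and dim: "Suc (Suc (2*m)) \<le> dim U"
  shows "\<exists>x\<in>U. x \<notin> span (b ` {..<2*m}) \<and> (\<forall>j<2*m. s x (b j) = 0) \<and> x \<notin> Rad s U"
proof -
  let ?W = "span (b ` {..<2*m})"
  obtain x1 where x1: "x1 \<in> U" "x1 \<notin> ?W" "\<forall>j<2*m. s x1 (b j) = 0"
    using exists_orthogonal_outside[OF b subspace_span order_refl U(1) W] dim
      dim_span_symplectic_frame[OF b] by auto
  let ?S = "span (insert x1 (b ` {..<2*m}))"
  have WS: "?W \<subseteq> ?S"
    by (rule span_mono) auto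
  obtain x2 where x2: "x2 \<in> U" "x2 \<notin> ?S" "\<forall>j<2*m. s x2 (b j) = 0"
    using exists_orthogonal_outside[OF b subspace_span WS U(1) W] dim
      dim_span_insert_symplectic_frame[OF b x1(2)] by auto
  have "x1 \<notin> Rad s U \<or> x2 \<notin> Rad s U"
  proof (rule ccontr)
    assume "\<not> ?thesis"
    moreover have "x1 \<noteq> 0"
      using x1(2) span_zero by auto
    ultimately have "x2 \<in> span {x1}"
      using dim_le_one_in_span[OF U(2)] by blast
    moreover have "span {x1} \<subseteq> ?S"
      by (rule span_mono) auto
    ultimately show False
      using x2(2) by blast
  qed
  then show ?thesis
    using x1 x2 WS by blast
qed

lemma exists_partner:
  "x \<in> U \<Longrightarrow> x \<notin> Rad s U \<Longrightarrow> \<exists>y\<in>U. s x y \<noteq> 0"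
  unfolding Rad_def perp_def by auto

lemma adapted_frame_Suc_Suc_if_next_odd:
  assumes G: "admissible_chain G" and b: "adapted_frame G b (2*m)"
    and n: "Suc (Suc (2*m)) \<le> dimension"
    and U: "U \<in> G" "span (b ` {..<2*m}) \<subseteq> U" "dim U = Suc (2*m)"
  shows "\<exists>b'. adapted_frame G b' (Suc (Suc (2*m)))"
proof -
  let ?W = "span (b ` {..<2*m})"
  have frame: "symplectic_frame b (2*m)"
    using b unfolding adapted_frame_def by blast
  have subU: "subspace U"
    using G U(1) by (rule admissible_chain_subspace)
  obtain x where x: "x \<in> U" "x \<notin> ?W" "\<forall>j<2*m. s x (b j) = 0"
    using exists_orthogonal_outside[OF frame subspace_span order_refl subU U(2)] U(3)
      dim_span_symplectic_frame[OF frame] by auto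
  have "span (insert x (b ` {..<2*m})) \<subseteq> U"
    using x(1) U(2) span_superset[of "b ` {..<2*m}"] by (intro span_minimal subU) auto
  then have U_eq: "U = span (insert x (b ` {..<2*m}))"
    using subspace_dim_equal[OF subspace_span subU] U(3)
      dim_span_insert_symplectic_frame[OF frame x(2)] by (metis order_refl)
  \<comment> \<open>U is degenerate, so the partner of x must come from the next member U',
    whose radical meets U trivially.\<close>
  obtain U' where U': "U' \<in> G" "Suc (2*m) < dim U'"
    and least: "\<And>X. X \<in> G \<Longrightarrow> Suc (2*m) < dim X \<Longrightarrow> U' \<subseteq> X"
    using admissible_chain_least_above[OF G, of "Suc (2*m)"] n by auto
  have UU': "U \<subseteq> U'" "U \<inter> Rad s U' = {0}"
    using admissible_chain_less[OF G U(1) U'(1)] U(3) U'(2) by auto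
  have "x \<noteq> 0"
    using x(2) span_zero by auto
  then obtain y where y: "y \<in> U'" "s x y \<noteq> 0"
    using exists_partner[of x U'] x(1) UU' by auto
  show ?thesis
  proof (rule adapted_frame_add_pair[OF G b U'(1) _ _ _ x(2,3) y])
    show "?W \<subseteq> U'" "x \<in> U'"
      using U(2) x(1) UU'(1) by auto
    show "\<And>X. X \<in> G \<Longrightarrow> Suc (Suc (2*m)) \<le> dim X \<Longrightarrow> U' \<subseteq> X"
      using least by simp
    show "\<And>X. X \<in> G \<Longrightarrow> dim X = Suc (2*m) \<Longrightarrow> X = span (insert x (b ` {..<2*m}))"
      using admissible_chain_dim_eq[OF G _ U(1)] U(3) U_eq by simp
  qed
qed

lemma adapted_frame_Suc_Suc_if_next_large:
  assumes G: "admissible_chain G" and b: "adapted_frame G b (2*m)"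
    and U: "U \<in> G" "span (b ` {..<2*m}) \<subseteq> U" "Suc (Suc (2*m)) \<le> dim U"
    and least: "\<And>X. X \<in> G \<Longrightarrow> 2*m < dim X \<Longrightarrow> U \<subseteq> X"
  shows "\<exists>b'. adapted_frame G b' (Suc (Suc (2*m)))"
proof -
  have frame: "symplectic_frame b (2*m)"
    using b unfolding adapted_frame_def by blast
  obtain x where x: "x \<in> U" "x \<notin> span (b ` {..<2*m})" "\<forall>j<2*m. s x (b j) = 0"
    "x \<notin> Rad s U"
    using exists_orthogonal_nonradical[OF frame admissible_chain_subspace[OF G U(1)]
        admissible_chain_dim_Rad[OF G U(1)] U(2,3)]
    by blast
  obtain y where y: "y \<in> U" "s x y \<noteq> 0"
    using exists_partner[OF x(1,4)] by blast
  show ?thesis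
  proof (rule adapted_frame_add_pair[OF G b U(1,2) _ x(1-3) y])
    show "\<And>X. X \<in> G \<Longrightarrow> Suc (Suc (2*m)) \<le> dim X \<Longrightarrow> U \<subseteq> X"
      using least by simp
    show "X = span (insert x (b ` {..<2*m}))" if "X \<in> G" "dim X = Suc (2*m)" for X
      using least[OF that(1)] dim_subset[of U X] that(2) U(3) by simp
  qed
qed

lemma adapted_frame_Suc_Suc:
  assumes G: "admissible_chain G" and b: "adapted_frame G b (2*m)"
    and n: "Suc (Suc (2*m)) \<le> dimension"
  shows "\<exists>b'. adapted_frame G b' (Suc (Suc (2*m)))"
proof -
  obtain U where U: "U \<in> G" "2*m < dim U"
    and least: "\<And>X. X \<in> G \<Longrightarrow> 2*m < dim X \<Longrightarrow> U \<subseteq> X"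
    using admissible_chain_least_above[OF G, of "2*m"] n by auto
  have "span (b ` {..<2*m}) \<subseteq> U"
    using b U admissible_chain_subspace[OF G U(1)] unfolding adapted_frame_def
    by (intro span_minimal) auto
  moreover have "dim U = Suc (2*m) \<or> Suc (Suc (2*m)) \<le> dim U"
    using U(2) by linarith
  ultimately show ?thesis
    using adapted_frame_Suc_Suc_if_next_odd[OF G b n U(1)]
      adapted_frame_Suc_Suc_if_next_large[OF G b U(1) _ _ least] by blast
qed

lemma adapted_frame_last_odd:
  assumes G: "admissible_chain G" and b: "adapted_frame G b (2*m)"
    and n: "dimension = Suc (2*m)"
  shows "\<exists>b'. adapted_frame G b' dimension"
proof -
  have frame: "symplectic_frame b (2*m)"
    and low: "\<And>X. X \<in> G \<Longrightarrow> dim X \<le> 2*m \<Longrightarrow> X = span (b ` {..<dim X})"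
    using b unfolding adapted_frame_def by auto
  obtain x where x: "x \<notin> span (b ` {..<2*m})" "\<forall>j<2*m. s x (b j) = 0"
    using exists_orthogonal_outside[OF frame subspace_span order_refl subspace_UNIV subset_UNIV]
      n dim_span_symplectic_frame[OF frame] by (auto simp: dimension_def)
  let ?b' = "b(2*m := x)"
  have frame': "symplectic_frame ?b' dimension"
    unfolding n using x symplectic_gram_even_less by (intro symplectic_frame_extend[OF frame]) auto
  have "adapted_frame G ?b' dimension"
    unfolding adapted_frame_def
  proof (intro conjI ballI impI frame')
    fix X assume X: "X \<in> G" "dim X \<le> dimension"
    show "X = span (?b' ` {..<dim X})"
    proof (cases "dim X \<le> 2*m")
      case True
      then show ?thesis using low[OF X(1)] fun_upd_image_lessThan by simp
    next
      case False
      then have "dim X = dimension"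
        using X(2) n by simp
      then have "X = UNIV"
        using subspace_eq_UNIV_iff_dim admissible_chain_subspace[OF G X(1)] by blast
      then show ?thesis
        using span_symplectic_frame_dimension[OF frame'] \<open>dim X = dimension\<close> by metis
    qed
  next
    fix X assume "X \<in> G" "dimension \<le> dim X"
    then have "X = UNIV"
      using subspace_eq_UNIV_iff_dim admissible_chain_subspace[OF G] dim_subset_UNIV[of X]
      by (simp add: le_antisym)
    then show "?b' ` {..<dimension} \<subseteq> X" by simp
  qed
  then show ?thesis by blast
qed

lemma exists_adapted_basis:
  assumes G: "admissible_chain G"
  shows "\<exists>b. adapted_frame G b dimension"
proof -
  have even: "\<exists>b. adapted_frame G b (2*m)" if "2*m \<le> dimension" for m
    using that
  proof (induction m)
    case 0
    show ?case using adapted_frame_0[OF G] by auto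
  next
    case (Suc m)
    then obtain b where "adapted_frame G b (2*m)" by auto
    then show ?case using adapted_frame_Suc_Suc[OF G] Suc.prems by simp
  qed
  define m where "m = dimension div 2"
  have "dimension = 2*m \<or> dimension = Suc (2*m)"
    unfolding m_def by presburger
  then show ?thesis
  proof
    assume "dimension = 2*m"
    then show ?thesis using even[of m] by simp
  next
    assume odd: "dimension = Suc (2*m)"
    then obtain b where "adapted_frame G b (2*m)" using even[of m] by auto
    then show ?thesis using adapted_frame_last_odd[OF G _ odd] by blast
  qed
qed

lemma exists_Sp_map_frame:
  assumes b: "symplectic_frame b dimension" and b': "symplectic_frame b' dimension"
  shows "\<exists>g\<in>Sp scale s. \<forall>k\<le>dimension. g ` span (b ` {..<k}) = span (b' ` {..<k})"
proof -
  interpret P: vector_space_pair scale scale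
    by (intro vector_space_pair.intro vector_space_axioms)
  let ?B = "b ` {..<dimension}"
  have indep: "independent ?B" and inj: "inj_on b {..<dimension}"
    using b unfolding symplectic_frame_def by auto
  define g where "g = P.construct ?B (\<lambda>v. b' (the_inv_into {..<dimension} b v))"
  have lin: "Vector_Spaces.linear scale scale g"
    unfolding g_def by (rule P.linear_construct[OF indep])
  have gb: "g (b i) = b' i" if "i < dimension" for i
    unfolding g_def using that P.construct_basis[OF indep, of "b i"] the_inv_into_f_f[OF inj]
    by auto
  have g_span: "g ` span (b ` {..<k}) = span (b' ` {..<k})" if "k \<le> dimension" for k
  proof -
    have "g ` b ` {..<k} = b' ` {..<k}"
      unfolding image_image using that gb by (intro image_cong) auto
    then show ?thesis
      using P.linear_span_image[OF lin, of "b ` {..<k}"] by simp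
  qed
  have "surj g"
    using g_span[of dimension] span_symplectic_frame_dimension[OF b]
      span_symplectic_frame_dimension[OF b'] by simp
  then have "bij g"
    using linear_surj_imp_inj[OF lin] by (simp add: bij_def)
  moreover have "s (g x) (g y) = s x y" for x y
  proof (rule form_preserved_on_span[OF lin])
    show "s (g a) (g c) = s a c" if "a \<in> ?B" "c \<in> ?B" for a c
      using that b b' gb unfolding symplectic_frame_def by auto
  qed (simp_all add: span_symplectic_frame_dimension[OF b])
  ultimately show ?thesis
    using lin g_span unfolding Sp_def by blast
qed

lemma exists_Sp_map_chain:
  assumes G: "admissible_chain G" and G': "admissible_chain G'"
  shows "\<exists>g\<in>Sp scale s. \<forall>U\<in>G. \<forall>U'\<in>G'. dim U = dim U' \<longrightarrow> g ` U = U'"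
proof -
  obtain b b' where b: "adapted_frame G b dimension" and b': "adapted_frame G' b' dimension"
    using exists_adapted_basis[OF G] exists_adapted_basis[OF G'] by blast
  have "symplectic_frame b dimension" "symplectic_frame b' dimension"
    using b b' unfolding adapted_frame_def by blast+
  then obtain g where g: "g \<in> Sp scale s"
    and g_span: "\<forall>k\<le>dimension. g ` span (b ` {..<k}) = span (b' ` {..<k})"
    by (blast dest: exists_Sp_map_frame)
  have U: "U = span (b ` {..<dim U})" if "U \<in> G" for U
    using b that dim_subset_UNIV[of U] unfolding adapted_frame_def by blast
  have U': "U' = span (b' ` {..<dim U'})" if "U' \<in> G'" for U'
    using b' that dim_subset_UNIV[of U'] unfolding adapted_frame_def by blast
  have "g ` U = U'" if "U \<in> G" "U' \<in> G'" "dim U = dim U'" for U U'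
  proof -
    from U[OF that(1)] have "g ` U = g ` span (b ` {..<dim U})"
      by (rule arg_cong)
    also have "\<dots> = span (b' ` {..<dim U'})"
      using g_span dim_subset_UNIV[of U] that(3) by simp
    also have "\<dots> = U'"
      using U'[OF that(2)] by (rule sym)
    finally show ?thesis .
  qed
  then show ?thesis
    using g by blast
qed

lemma otype_eq_dim [simp]: "otype scale = dim"
  by (simp add: otype_def fun_eq_iff)

lemma types_eq: "types scale = {1..dimension - 1}"
  by (simp add: types_def dimension_def)

lemma incident_commute: "incident s X Y \<longleftrightarrow> incident s Y X"
  unfolding incident_def by auto

lemma incident_dim_less:
  assumes "incident s X Y" "dim X < dim Y"
  shows "X \<subseteq> Y \<and> X \<inter> Rad s Y = {0}"
  using assms dim_subset[of Y X] unfolding incident_def by auto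

lemma admissible_chain_insert_UNIV:
  assumes rank: "maximal_rank scale s" and F: "flag_of_type scale s (objects scale s) K F"
  shows "admissible_chain (insert UNIV F)"
proof -
  have obj: "subspace X" "dim X < dimension" "X \<inter> Rad s UNIV = {0}" "dim (Rad s X) \<le> 1"
    if "X \<in> F" for X
    using F that unfolding flag_of_type_def objects_def types_eq by auto
  have inc: "\<And>X Y. X \<in> F \<Longrightarrow> Y \<in> F \<Longrightarrow> incident s X Y" and inj: "inj_on dim F"
    using F unfolding flag_of_type_def by auto
  show ?thesis
    unfolding admissible_chain_def
  proof (intro conjI ballI impI)
    show "UNIV \<in> insert UNIV F" by simp
    have "dim X \<noteq> dim (UNIV :: 'v set)" if "X \<in> F" for X
      using obj(2)[OF that] by (simp add: dimension_def)
    then have "dim (UNIV :: 'v set) \<notin> dim ` F"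
      unfolding image_iff by metis
    then show "inj_on dim (insert UNIV F)"
      using inj by auto
  next
    fix U assume "U \<in> insert UNIV F"
    then show "subspace U" "dim (Rad s U) \<le> 1"
      using obj rank subspace_UNIV unfolding maximal_rank_def by auto
  next
    fix X Y assume X: "X \<in> insert UNIV F" and Y: "Y \<in> insert UNIV F" and XY: "dim X < dim Y"
    then have "X \<in> F"
      using dim_subset_UNIV[of Y] by (auto simp: dimension_def)
    have "X \<subseteq> Y \<and> X \<inter> Rad s Y = {0}"
    proof (cases "Y = UNIV")
      case True
      then show ?thesis using obj(3)[OF \<open>X \<in> F\<close>] by simp
    next
      case False
      then have "Y \<in> F" using Y by simp
      then show ?thesis using incident_dim_less[OF inc[OF \<open>X \<in> F\<close>] XY] by blast
    qed
    then show "X \<subseteq> Y" "X \<inter> Rad s Y = {0}" by auto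
  qed
qed

lemma flag_of_type_residue_Un:
  assumes C: "chamber scale s C" and KJ: "K \<subseteq> J"
    and F: "flag_of_type scale s (residue scale s C J) K F"
  shows "flag_of_type scale s (objects scale s) (K \<union> (types scale - J))
           (F \<union> {Y\<in>C. otype scale Y \<in> types scale - J})"
proof -
  let ?C0 = "{Y\<in>C. otype scale Y \<in> types scale - J}"
  have C_flag: "C \<subseteq> objects scale s" "\<forall>X\<in>C. \<forall>Y\<in>C. incident s X Y" "inj_on dim C"
    "dim ` C = types scale"
    using C unfolding chamber_def flag_of_type_def by auto
  have F_flag: "F \<subseteq> objects scale s" "\<forall>X\<in>F. \<forall>Y\<in>F. incident s X Y" "inj_on dim F"
    "dim ` F = K" "\<forall>X\<in>F. \<forall>Y\<in>?C0. incident s X Y"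
    using F unfolding flag_of_type_def residue_def by auto
  have "inj_on dim (F \<union> ?C0)"
    unfolding inj_on_Un using C_flag(3) F_flag(3,4) KJ by (auto intro: inj_on_subset)
  moreover have "dim ` ?C0 = types scale - J"
    using C_flag(4) by auto
  moreover have "incident s X Y" if "X \<in> F \<union> ?C0" "Y \<in> F \<union> ?C0" for X Y
    using that C_flag(2) F_flag(2,5) incident_commute[of X Y] by auto
  ultimately show ?thesis
    unfolding flag_of_type_def using C_flag(1,4) F_flag(1,4) by auto
qed

lemma parabolic_maps_residue_flag:
  assumes rank: "maximal_rank scale s" and C: "chamber scale s C" and KJ: "K \<subseteq> J"
    and F: "flag_of_type scale s (residue scale s C J) K F"
    and F': "flag_of_type scale s (residue scale s C J) K F'"
  shows "\<exists>g\<in>parabolic scale s C J. (\<lambda>X. g ` X) ` F = F'"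
proof -
  let ?C0 = "{Y\<in>C. otype scale Y \<in> types scale - J}"
  have chain: "admissible_chain (insert UNIV (E \<union> ?C0))"
    if "flag_of_type scale s (residue scale s C J) K E" for E
    by (rule admissible_chain_insert_UNIV[OF rank flag_of_type_residue_Un[OF C KJ that]])
  from exists_Sp_map_chain[OF chain[OF F] chain[OF F']]
  obtain g where g: "g \<in> Sp scale s"
    and align: "\<forall>U\<in>insert UNIV (F \<union> ?C0). \<forall>U'\<in>insert UNIV (F' \<union> ?C0).
                  dim U = dim U' \<longrightarrow> g ` U = U'" ..
  have "g ` Y = Y" if "Y \<in> ?C0" for Y
    using align that by blast
  then have "g \<in> parabolic scale s C J"
    using g unfolding parabolic_def by blast
  moreover have "(\<lambda>X. g ` X) ` F = F'"
  proof (rule image_eq_if_keys_match[where f = dim])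
    show "dim ` F = dim ` F'"
      using F F' unfolding flag_of_type_def by simp
    show "g ` X = X'" if "X \<in> F" "X' \<in> F'" "dim X = dim X'" for X X'
      using align that by blast
  qed
  ultimately show ?thesis
    by blast
qed

end

theorem corollary5p4:
  fixes scale :: "'a::field \<Rightarrow> 'v::ab_group_add \<Rightarrow> 'v"
    and basis :: "'v set"
    and s :: "'v \<Rightarrow> 'v \<Rightarrow> 'a"
    and C :: "'v set set"
    and J :: "nat set"
  assumes "finite_dimensional_vector_space scale basis"
    and "bilinear_form scale s"
    and "alternating_form s"
    and "maximal_rank scale s"
    and "chamber scale s C"
    and "J \<subseteq> types scale"
  shows "flag_transitive scale s (parabolic scale s C J) (residue scale s C J) J"
proof -
  interpret alternating_space scale basis s
    using assms(1-3) by (intro alternating_space.intro alternating_space_axioms.intro)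
  show ?thesis
    unfolding flag_transitive_def
    using parabolic_maps_residue_flag[OF assms(4,5)] by blast
qed

end
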